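(* Let $q$ be a prime power, $m\ge2$ an integer, $n=q^m-1$, and $\delta_{\max}=q^{\lceil m/2\rceil}-1-(q-2)[m\text{ odd}]$. If $2\le\delta\le\delta_{\max}$, then the Euclidean dual code $C^\perp$ of $C=\mathcal{BCH}(n,q;\delta)$ has minimum distance $d^\perp\ge\delta_{\max}+1$.
   Context: Let $\alpha$ be a primitive element of $\mathbf{F}_{q^m}$ and $n=q^m-1$; $C_x=\{xq^k\bmod n\mid k\in\mathbf{Z}\}$. For $2\le\delta\le n$, $\mathcal{BCH}(n,q;\delta)$ is the cyclic code of length $n$ over $\mathbf{F}_q$ with generator polynomial $\prod_{z\in Z}(x-\alpha^z)$, where $Z=C_1\cup\cdots\cup C_{\delta-1}$. $C^\perp=\{y\in\mathbf{F}_q^n\mid x\cdot y=0\ \forall x\in C\}$. Iverson notation: $[P]=1$ if $P$ holds, $0$ otherwise. *)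

theory Defs
  imports "HOL-Computational_Algebra.Polynomial"
begin

definition field_emb :: "('a::field \<Rightarrow> 'b::field) \<Rightarrow> bool" where
  "field_emb e \<longleftrightarrow> e 1 = 1 \<and> (\<forall>x y. e (x + y) = e x + e y \<and> e (x * y) = e x * e y)"

definition primitive_elem :: "'b::field \<Rightarrow> bool" where
  "primitive_elem a \<longleftrightarrow> a \<noteq> 0 \<and> (\<forall>x. x \<noteq> 0 \<longrightarrow> (\<exists>k::nat. a ^ k = x))"

definition cyc_coset :: "nat \<Rightarrow> nat \<Rightarrow> nat \<Rightarrow> nat set" where
  "cyc_coset q n x = {x * q ^ k mod n | k. True}"

definition vecs :: "nat \<Rightarrow> (nat \<Rightarrow> 'a::zero) set" where
  "vecs n = {v. \<forall>i\<ge>n. v i = 0}"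

definition vec_poly :: "('a \<Rightarrow> 'b::zero) \<Rightarrow> nat \<Rightarrow> (nat \<Rightarrow> 'a) \<Rightarrow> 'b poly" where
  "vec_poly e n c = Poly (map (\<lambda>i. e (c i)) [0..<n])"

definition bch_gen :: "nat \<Rightarrow> 'b::field \<Rightarrow> nat \<Rightarrow> nat \<Rightarrow> 'b poly" where
  "bch_gen q \<alpha> n \<delta> = (\<Prod>z\<in>(\<Union>i\<in>{1..\<delta>-1}. cyc_coset q n i). [:- (\<alpha> ^ z), 1:])"

definition bch_code :: "('a::field \<Rightarrow> 'b::field) \<Rightarrow> nat \<Rightarrow> 'b \<Rightarrow> nat \<Rightarrow> nat \<Rightarrow> (nat \<Rightarrow> 'a) set" where
  "bch_code e q \<alpha> n \<delta> = {c \<in> vecs n. bch_gen q \<alpha> n \<delta> dvd vec_poly e n c}"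

definition dual_code :: "nat \<Rightarrow> (nat \<Rightarrow> 'a::comm_ring) set \<Rightarrow> (nat \<Rightarrow> 'a) set" where
  "dual_code n C = {y \<in> vecs n. \<forall>x\<in>C. (\<Sum>i<n. x i * y i) = 0}"

definition hamming_dist :: "nat \<Rightarrow> (nat \<Rightarrow> 'a) \<Rightarrow> (nat \<Rightarrow> 'a) \<Rightarrow> nat" where
  "hamming_dist n x y = card {i \<in> {0..<n}. x i \<noteq> y i}"

definition min_dist_ge :: "nat \<Rightarrow> (nat \<Rightarrow> 'a) set \<Rightarrow> nat \<Rightarrow> bool" where
  "min_dist_ge n C d \<longleftrightarrow> (\<forall>x\<in>C. \<forall>y\<in>C. x \<noteq> y \<longrightarrow> hamming_dist n x y \<ge> d)"

definition delta_max :: "nat \<Rightarrow> nat \<Rightarrow> nat" where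
  "delta_max q m = q ^ ((m + 1) div 2) - 1 - (if odd m then q - 2 else 0)"

end

(*
  For s < delta_max and b in GF(q^m), the word c with c_i = Tr(b * alpha^(i*s)) has its
  entries in GF(q) and lies in BCH(n,q;delta): expanding the trace through the Frobenius map,
  its value at alpha^z is a combination of geometric sums with ratios alpha^(s*q^j + z), and
  these are nontrivial n-th roots of unity for every z in C_1, ..., C_(delta-1).  That last fact
  is arithmetic: multiplication by q^j modulo q^m - 1 rotates base-q digits, and delta_max is
  exactly small enough that no rotation of a number below delta_max exceeds n - delta_max.
  Since the trace is a nonzero GF(q)-linear form, a dual codeword y must then satisfy
  sum_i y_i * alpha^(i*s) = 0 for all s < delta_max, and the BCH bound (a Vandermonde argument)
  shows that every nonzero difference of dual codewords has weight greater than delta_max.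
*)
theory Submission
  imports Defs "HOL-Number_Theory.Cong" "HOL-Algebra.FiniteProduct"
begin

section \<open>Arithmetic of delta_max\<close>

lemma delta_max_le_power: "delta_max q m \<le> q ^ ((m + 1) div 2)"
  by (simp add: delta_max_def)

lemma delta_max_even: "delta_max q (2 * h) + 1 = q ^ h" if "q > 0"
  using that by (simp add: delta_max_def)

lemma delta_max_odd: "delta_max q (2 * h + 1) + q = q * q ^ h + 1" if "q \<ge> 2"
proof -
  have "q \<le> q * q ^ h" using that by simp
  moreover have "delta_max q (2 * h + 1) = q * q ^ h - 1 - (q - 2)" by (simp add: delta_max_def)
  ultimately show ?thesis using that by linarith
qed

lemma mult_power_add_delta_max_less:
  fixes q m x :: nat
  assumes q: "q \<ge> 2" and x: "x < delta_max q m"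
  shows "x * q ^ (m - (m + 1) div 2) + delta_max q m < q ^ m"
proof (cases "even m")
  case True
  then obtain h where h: "m = 2 * h" by (rule evenE)
  define P where "P = q ^ h"
  have D: "delta_max q m + 1 = P" using q h delta_max_even[of q h] unfolding P_def by simp
  have "(x + 1) * P \<le> P * P" using x D by (intro mult_le_mono1) simp
  moreover have "q ^ m = P * P" unfolding P_def h by (simp add: power_mult mult_2 power_add)
  ultimately show ?thesis using h D by (simp add: P_def[symmetric] algebra_simps)
next
  case False
  then obtain h where h: "m = 2 * h + 1" by (rule oddE)
  define P where "P = q ^ h"
  have D: "delta_max q m + q = q * P + 1" using q h delta_max_odd[of q h] unfolding P_def by simp
  have "(x + q) * P \<le> (q * P) * P" using x D by (intro mult_le_mono1) simp
  moreover have "q ^ m = q * P * P" unfolding P_def h by (simp add: power_mult mult_2 power_add)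
  ultimately show ?thesis using h D q by (simp add: P_def[symmetric] algebra_simps)
qed

lemma add_delta_max_less_power:
  fixes q m a t :: nat
  assumes q: "q \<ge> 2" and t: "0 < t" "t < (m + 1) div 2"
    and a: "(a + 1) * q ^ t \<le> delta_max q m"
  shows "a + delta_max q m < q ^ (m - t)"
proof -
  define H where "H = (m + 1) div 2"
  define D where "D = delta_max q m"
  have "a + 1 \<le> (a + 1) * q ^ t" using mult_le_mono2[of 1 "q ^ t" "a + 1"] q by simp
  with a have aD: "a + 1 \<le> D" unfolding D_def by linarith
  show ?thesis
  proof (cases "H < m - t")
    case True
    have "2 * D \<le> q * q ^ H" using q delta_max_le_power[of q m] unfolding D_def H_def
      by (intro mult_le_mono) auto
    also have "q * q ^ H = q ^ Suc H" by simp
    also have "\<dots> \<le> q ^ (m - t)" using True q by (intro power_increasing) auto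
    finally show ?thesis using aD unfolding D_def by linarith
  next
    case False
    then have m: "m = 2 * t + 1" using t unfolding H_def by presburger
    define P where "P = q ^ t"
    have "D + q = q * P + 1" using delta_max_odd[OF q, of t] unfolding D_def P_def m by simp
    with a q have "(a + 1) * P < q * P" unfolding D_def P_def by linarith
    then have "a + 1 < q" by (rule mult_less_cancel2[THEN iffD1, THEN conjunct2])
    then show ?thesis using \<open>D + q = q * P + 1\<close> unfolding D_def P_def m by simp
  qed
qed

(* Writing x = a * q^(m-j) + c, multiplication by q^j modulo q^m - 1 sends x to a + c * q^j. *)
lemma mult_power_mod_add_delta_max_less:
  fixes q m x j :: nat
  assumes q: "q \<ge> 2" and x: "x < delta_max q m" and j: "j < m"
  shows "x * q ^ j mod (q ^ m - 1) + delta_max q m < q ^ m"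
proof -
  define H where "H = (m + 1) div 2"
  define D where "D = delta_max q m"
  define n where "n = q ^ m - 1"
  have qm: "q ^ m = n + 1" unfolding n_def using q by simp
  show ?thesis
  proof (cases "j \<le> m - H")
    case True
    have "x * q ^ j \<le> x * q ^ (m - H)" using True q by (simp add: power_increasing)
    moreover have "x * q ^ j mod n \<le> x * q ^ j" by (rule mod_less_eq_dividend)
    ultimately show ?thesis using mult_power_add_delta_max_less[OF q x] unfolding H_def n_def
      by linarith
  next
    case False
    define t where "t = m - j"
    define T where "T = q ^ t"
    define X where "X = q ^ j"
    define a where "a = x div T"
    define c where "c = x mod T"
    have TX: "T * X = n + 1" unfolding T_def X_def t_def qm[symmetric] using j by (simp flip: power_add)
    have "x = a * T + c" unfolding a_def c_def by simp
    then have "x * q ^ j = a * (T * X) + c * X" unfolding X_def by (simp add: algebra_simps)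
    then have x_rot: "x * q ^ j = (a + c * X) + a * n" unfolding TX by (simp add: algebra_simps)
    have "H \<le> j" using False unfolding H_def by linarith
    then have "q ^ H \<le> X" unfolding X_def using q by (intro power_increasing) auto
    then have "D \<le> X" using delta_max_le_power[of q m] unfolding D_def H_def by linarith
    have "c < T" unfolding c_def T_def using q by simp
    have "a + c * X + D < T * X"
    proof (cases "c + 1 < T")
      case True
      then have "(c + 2) * X \<le> T * X" by (intro mult_le_mono1) simp
      moreover have "a < X" using \<open>D \<le> X\<close> x div_le_dividend[of x T] unfolding a_def D_def
        by linarith
      ultimately show ?thesis using \<open>D \<le> X\<close> by (simp add: algebra_simps)
    next
      case False
      with \<open>c < T\<close> have "c + 1 = T" by simp
      then have "(a + 1) * q ^ t \<le> delta_max q m"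
        using \<open>x = a * T + c\<close> x unfolding T_def by (simp add: algebra_simps)
      moreover have "0 < t" "t < (m + 1) div 2" using j \<open>\<not> j \<le> m - H\<close> unfolding t_def H_def by auto
      ultimately have "a + D < q ^ (m - t)" unfolding D_def by (intro add_delta_max_less_power[OF q])
      then have "a + D < X" unfolding X_def t_def using j by simp
      moreover have "c * X + X = T * X" using \<open>c + 1 = T\<close> by (metis add_mult_distrib mult_1)
      ultimately show ?thesis by linarith
    qed
    then have "x * q ^ j mod n = a + c * X" unfolding x_rot TX using x by (simp add: D_def)
    then show ?thesis using \<open>a + c * X + D < T * X\<close> TX qm unfolding D_def by simp
  qed
qed

lemma power_cong_power_mod:
  fixes q m x :: nat
  assumes "q > 0"
  shows "[q ^ x = q ^ (x mod m)] (mod q ^ m - 1)"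
proof -
  have "[q ^ m = 1] (mod q ^ m - 1)"
    using assms by (simp add: cong_def le_mod_geq)
  then have "[q ^ (x mod m) * (q ^ m) ^ (x div m) = q ^ (x mod m) * 1 ^ (x div m)] (mod q ^ m - 1)"
    by (intro cong_mult cong_refl cong_pow)
  then show ?thesis by (simp flip: power_mult power_add)
qed

lemma not_dvd_mult_power_add_mult_power:
  fixes q m s i j l :: nat
  assumes q: "q \<ge> 2" and s: "s < delta_max q m" and i: "0 < i" "i < delta_max q m"
  shows "\<not> (q ^ m - 1) dvd s * q ^ j + i * q ^ l"
proof
  have "0 < m" using i by (cases m) (simp_all add: delta_max_def)
  define n where "n = q ^ m - 1"
  define k where "k = (j + (m - 1) * l) mod m"
  assume "n dvd s * q ^ j + i * q ^ l"
  have "[q ^ (j + (m - 1) * l) = q ^ k] (mod n)"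
    unfolding n_def k_def by (rule power_cong_power_mod) (use q in simp)
  moreover have "[q ^ (m * l) = 1] (mod n)"
    using power_cong_power_mod[of q "m * l" m] q unfolding n_def by simp
  ultimately have "[s * q ^ (j + (m - 1) * l) + i * q ^ (m * l) = s * q ^ k + i * 1] (mod n)"
    by (intro cong_add cong_scalar_left)
  then have "[s * q ^ k + i = s * q ^ (j + (m - 1) * l) + i * q ^ (m * l)] (mod n)"
    by (simp add: cong_sym_eq)
  also have "s * q ^ (j + (m - 1) * l) + i * q ^ (m * l) = (s * q ^ j + i * q ^ l) * q ^ ((m - 1) * l)"
  proof -
    have "l + (m - 1) * l = m * l" using \<open>0 < m\<close> by (cases m) auto
    then show ?thesis by (simp add: algebra_simps flip: power_add)
  qed
  also have "[\<dots> = 0] (mod n)"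
    using \<open>n dvd _\<close> by (simp add: cong_0_iff)
  finally have "n dvd s * q ^ k mod n + i"
    by (simp add: cong_0_iff dvd_eq_mod_eq_0 mod_add_left_eq)
  moreover have "s * q ^ k mod n + delta_max q m < q ^ m"
    unfolding n_def k_def using q s \<open>0 < m\<close> by (intro mult_power_mod_add_delta_max_less) auto
  ultimately show False using i nat_dvd_not_less unfolding n_def by force
qed

section \<open>Finite fields and the trace\<close>

lemma card_field_ge_2: "2 \<le> card (UNIV :: 'c::{finite,field} set)"
  using card_mono[of UNIV "{0 :: 'c, 1}"] by simp

(* The library's finite_field_power_card_eq_same needs the sort finite_field. *)
lemma finite_field_power_card:
  fixes x :: "'c::{finite,field}"
  shows "x ^ card (UNIV :: 'c set) = x"
proof (cases "x = 0")
  case False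
  define G :: "'c monoid" where "G = \<lparr>carrier = UNIV - {0 :: 'c}, mult = (*), one = 1\<rparr>"
  interpret G: comm_group G
    by (rule comm_groupI) (auto simp: G_def intro!: bexI[of _ "inverse _"])
  have "x [^]\<^bsub>G\<^esub> k = x ^ k" for k
    by (induction k) (simp_all add: G_def mult.commute)
  then have "x ^ card (UNIV - {0 :: 'c}) = 1"
    using G.power_order_eq_one[of x] False by (simp add: G_def)
  then have "x ^ Suc (card (UNIV :: 'c set) - 1) = x"
    by (simp add: card_Diff_singleton)
  then show ?thesis using card_field_ge_2[where 'c = 'c] by simp
qed (use card_field_ge_2[where 'c = 'c] in simp)

(*
  (X + 1)^q - X^q - 1 has degree below q but vanishes on all q field elements.  This yields
  the additivity of x^q without showing that q is a power of the characteristic.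
*)
lemma of_nat_card_choose_eq_0:
  assumes "0 < k" "k < card (UNIV :: 'c::{finite,field} set)"
  shows "(of_nat (card (UNIV :: 'c set) choose k) :: 'c) = 0"
proof -
  define q where "q = card (UNIV :: 'c set)"
  define P :: "'c poly" where "P = (\<Sum>i\<in>{1..<q}. monom (of_nat (q choose i)) i)"
  have "0 < q" using assms unfolding q_def by linarith
  have "poly P x = (x + 1) ^ q - x ^ q - 1" for x
  proof -
    have "(x + 1) ^ q = (\<Sum>i\<le>q. of_nat (q choose i) * x ^ i)"
      by (simp add: binomial_ring)
    also have "{..q} = {0, q} \<union> {1..<q}" using \<open>0 < q\<close> by auto
    also have "(\<Sum>i\<in>{0, q} \<union> {1..<q}. of_nat (q choose i) * x ^ i) =
        (\<Sum>i\<in>{1..<q}. of_nat (q choose i) * x ^ i) + x ^ q + 1"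
      using \<open>0 < q\<close> by (subst sum.union_disjoint) auto
    finally show ?thesis by (simp add: P_def poly_sum poly_monom)
  qed
  then have roots: "poly P x = 0" for x
    by (simp add: finite_field_power_card q_def)
  have "P = 0"
  proof (rule ccontr)
    assume "P \<noteq> 0"
    have "degree P \<le> q - 1"
      unfolding P_def by (intro degree_sum_le) (auto intro: order.trans[OF degree_monom_le])
    then have "degree P < q" using \<open>0 < q\<close> by linarith
    moreover have "card {x. poly P x = 0} = q" using roots by (simp add: q_def)
    ultimately show False using card_poly_roots_bound[OF \<open>P \<noteq> 0\<close>] by linarith
  qed
  then have "coeff P k = 0" by simp
  moreover have "coeff P k = of_nat (q choose k)"
    using assms unfolding P_def by (simp add: coeff_sum coeff_monom q_def)
  ultimately show ?thesis by (simp add: q_def)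
qed

lemma add_power_eq_if_of_nat_choose_eq_0:
  fixes x y :: "'r::comm_semiring_1"
  assumes "0 < N" and choose: "\<And>k. 0 < k \<Longrightarrow> k < N \<Longrightarrow> (of_nat (N choose k) :: 'r) = 0"
  shows "(x + y) ^ N = x ^ N + y ^ N"
proof -
  have "(x + y) ^ N = (\<Sum>k\<le>N. of_nat (N choose k) * x ^ k * y ^ (N - k))"
    by (rule binomial_ring)
  also have "\<dots> = (\<Sum>k\<in>{0, N}. of_nat (N choose k) * x ^ k * y ^ (N - k))"
    using choose by (intro sum.mono_neutral_right) auto
  finally show ?thesis using \<open>0 < N\<close> by (simp add: add.commute)
qed

context
  fixes e :: "'a::field \<Rightarrow> 'b::field"
  assumes emb: "field_emb e"
begin

lemma field_emb_add: "e (x + y) = e x + e y"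
  using emb by (simp add: field_emb_def)

lemma field_emb_mult: "e (x * y) = e x * e y"
  using emb by (simp add: field_emb_def)

lemma field_emb_zero: "e 0 = 0"
  using field_emb_add[of 0 0] by (metis add_cancel_left_right add_0)

lemma field_emb_sum: "e (sum f A) = (\<Sum>x\<in>A. e (f x))"
  by (induction A rule: infinite_finite_induct) (simp_all add: field_emb_zero field_emb_add)

lemma field_emb_of_nat: "e (of_nat k) = of_nat k"
  using emb by (induction k) (simp_all add: field_emb_zero field_emb_add field_emb_def)

lemma field_emb_power: "e (x ^ k) = e x ^ k"
  using emb by (induction k) (simp_all add: field_emb_mult field_emb_def)

lemma inj_field_emb: "inj e"
proof (rule injI, rule ccontr)
  fix x y assume "e x = e y" "x \<noteq> y"
  then have "e (x - y) = 0" using field_emb_add[of "x - y" y] by simp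
  then have "e ((x - y) * inverse (x - y)) = 0" by (simp add: field_emb_mult)
  with \<open>x \<noteq> y\<close> emb show False by (simp add: field_emb_def)
qed

end

locale finite_field_extension =
  fixes e :: "'a::{finite,field} \<Rightarrow> 'b::{finite,field}" and q m :: nat
  assumes card_subfield: "card (UNIV :: 'a set) = q"
    and card_extension: "card (UNIV :: 'b set) = q ^ m"
    and emb: "field_emb e"
begin

lemma q_ge_2: "q \<ge> 2"
  using card_field_ge_2[where 'c = 'a] by (simp add: card_subfield)

lemma m_pos: "m > 0"
  using card_field_ge_2[where 'c = 'b] by (cases m) (simp_all add: card_extension)

lemma power_extension_card: "(x :: 'b) ^ (q ^ m) = x"
  using finite_field_power_card[of x] by (simp add: card_extension)

lemma emb_power_q_power: "e a ^ (q ^ j) = e a"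
proof (induction j)
  case (Suc j)
  have "e a ^ (q ^ Suc j) = e (a ^ q) ^ (q ^ j)"
    by (simp add: field_emb_power[OF emb] power_mult mult.commute flip: power_mult)
  also have "a ^ q = a" using finite_field_power_card[of a] by (simp add: card_subfield)
  finally show ?case using Suc by simp
qed simp

lemma add_power_q: "(x + y :: 'b) ^ q = x ^ q + y ^ q"
proof (rule add_power_eq_if_of_nat_choose_eq_0)
  show "0 < q" using q_ge_2 by simp
  fix k assume "0 < k" "k < q"
  then have "(of_nat (q choose k) :: 'a) = 0"
    using of_nat_card_choose_eq_0[where 'c = 'a] by (simp add: card_subfield)
  then show "(of_nat (q choose k) :: 'b) = 0"
    using field_emb_of_nat[OF emb, of "q choose k"] field_emb_zero[OF emb] by simp
qed

lemma sum_power_q: "(sum f A :: 'b) ^ q = (\<Sum>x\<in>A. f x ^ q)"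
  using q_ge_2 by (induction A rule: infinite_finite_induct) (simp_all add: add_power_q)

lemma sum_power_q_power: "(sum f A :: 'b) ^ (q ^ j) = (\<Sum>x\<in>A. f x ^ (q ^ j))"
proof (induction j)
  case (Suc j)
  have "sum f A ^ (q ^ Suc j) = (sum f A ^ (q ^ j)) ^ q"
    by (simp add: ac_simps flip: power_mult)
  also have "\<dots> = (\<Sum>x\<in>A. (f x ^ (q ^ j)) ^ q)"
    unfolding Suc sum_power_q ..
  finally show ?case by (simp add: ac_simps flip: power_mult)
qed simp

definition trace :: "'b \<Rightarrow> 'b" where
  "trace x = (\<Sum>j<m. x ^ (q ^ j))"

lemma trace_sum: "trace (sum f A) = (\<Sum>x\<in>A. trace (f x))"
  unfolding trace_def sum_power_q_power by (rule sum.swap)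

lemma trace_emb_mult: "trace (e a * x) = e a * trace x"
  unfolding trace_def by (simp add: power_mult_distrib emb_power_q_power sum_distrib_left)

lemma trace_power_q: "trace x ^ q = trace x"
proof -
  have "trace x ^ q = (\<Sum>j<m. x ^ (q ^ Suc j))"
    unfolding trace_def sum_power_q by (simp add: ac_simps flip: power_mult)
  also have "\<dots> = trace x"
    unfolding trace_def using sum.lessThan_Suc_shift[of "\<lambda>j. x ^ (q ^ j)" m]
    by (simp add: power_extension_card add.commute)
  finally show ?thesis .
qed

lemma power_q_eq_imp_in_range:
  assumes "(y :: 'b) ^ q = y"
  shows "y \<in> range e"
proof -
  define P :: "'b poly" where "P = monom 1 q - [:0, 1:]"
  have poly_P: "poly P x = x ^ q - x" for x unfolding P_def by (simp add: poly_monom)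
  have "coeff [:0, 1:] q = 0" using q_ge_2 by (intro coeff_eq_0) simp
  then have "coeff P q = 1" by (simp add: P_def coeff_monom)
  then have "P \<noteq> 0" by auto
  have "degree P \<le> q" unfolding P_def using q_ge_2
    by (intro order.trans[OF degree_diff_le_max]) (auto simp: degree_monom_le)
  then have "card {x. poly P x = 0} \<le> q" using card_poly_roots_bound[OF \<open>P \<noteq> 0\<close>] by linarith
  moreover have roots: "range e \<subseteq> {x. poly P x = 0}"
    using emb_power_q_power[of _ 1] by (auto simp: poly_P)
  moreover have "card (range e) = q" using inj_field_emb[OF emb] by (simp add: card_image card_subfield)
  moreover have "card (range e) \<le> card {x. poly P x = 0}" using roots by (intro card_mono) auto
  ultimately have "range e = {x. poly P x = 0}" by (intro card_subset_eq) auto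
  then show ?thesis using assms by (simp add: poly_P)
qed

lemma trace_in_range: "trace x \<in> range e"
  by (rule power_q_eq_imp_in_range[OF trace_power_q])

lemma trace_nonzero: "\<exists>b. trace b \<noteq> 0"
proof (rule ccontr)
  assume trace_0: "\<not> (\<exists>b. trace b \<noteq> 0)"
  define P :: "'b poly" where "P = (\<Sum>j<m. monom 1 (q ^ j))"
  have "poly P = trace" unfolding P_def trace_def by (simp add: poly_sum poly_monom fun_eq_iff)
  have "q ^ j = 1 \<longleftrightarrow> j = 0" for j using q_ge_2 by simp
  then have "coeff P 1 = 1" using m_pos unfolding P_def by (simp add: coeff_sum coeff_monom)
  then have "P \<noteq> 0" by auto
  have "degree P \<le> q ^ (m - 1)" unfolding P_def
    by (intro degree_sum_le order.trans[OF degree_monom_le] power_increasing) (use q_ge_2 in auto)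
  also have "\<dots> < q ^ m" using q_ge_2 m_pos by (intro power_strict_increasing) auto
  finally have "degree P < card (UNIV :: 'b set)" by (simp add: card_extension)
  moreover have "{x. poly P x = 0} = UNIV" using \<open>poly P = trace\<close> trace_0 by auto
  ultimately show False using card_poly_roots_bound[OF \<open>P \<noteq> 0\<close>] by simp
qed

end

section \<open>The BCH bound\<close>

lemma poly_Poly_map_upt:
  fixes f :: "nat \<Rightarrow> 'c::comm_semiring_1"
  shows "poly (Poly (map f [0..<n])) x = (\<Sum>i<n. f i * x ^ i)"
proof (induction n)
  case (Suc n)
  have "Poly (map f [0..<Suc n]) = Poly (map f [0..<n]) + monom 1 n * [:f n:]"
    using Poly_append[of "map f [0..<n]" "[f n]"] by simp
  then show ?case using Suc by (simp add: poly_monom mult.commute)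
qed simp

lemma prod_linear_factors_dvd:
  fixes f :: "'x \<Rightarrow> 'c::field"
  assumes "finite A" "inj_on f A" "\<And>a. a \<in> A \<Longrightarrow> poly P (f a) = 0"
  shows "(\<Prod>a\<in>A. [:- f a, 1:]) dvd P"
  using assms
proof (induction A rule: finite_induct)
  case (insert a A)
  then obtain R where R: "P = (\<Prod>a\<in>A. [:- f a, 1:]) * R"
    by (auto elim: dvdE intro: inj_on_subset)
  have "f a \<noteq> f a'" if "a' \<in> A" for a'
    using insert(2,4) that by (auto dest: inj_onD)
  then have "poly (\<Prod>a\<in>A. [:- f a, 1:]) (f a) \<noteq> 0"
    using insert(1) by (simp add: poly_prod prod_zero_iff)
  moreover have "poly P (f a) = 0" using insert by simp
  ultimately have "[:- f a, 1:] dvd R" using R by (simp add: poly_eq_0_iff_dvd)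
  then show ?case
    unfolding prod.insert[OF insert(1,2)] R by (metis mult.commute mult_dvd_mono dvd_refl)
qed simp

lemma bch_bound:
  fixes \<beta> :: "'c::field" and u :: "nat \<Rightarrow> 'c"
  assumes inj: "inj_on (\<lambda>i. \<beta> ^ i) {..<n}"
    and vanish: "\<And>s. s < D \<Longrightarrow> (\<Sum>i<n. u i * \<beta> ^ (i * s)) = 0"
    and i0: "i0 < n" "u i0 \<noteq> 0"
  shows "D < card {i. i < n \<and> u i \<noteq> 0}"
proof (rule ccontr)
  define S where "S = {i. i < n \<and> u i \<noteq> 0}"
  assume "\<not> D < card {i. i < n \<and> u i \<noteq> 0}"
  then have "card S \<le> D" unfolding S_def by simp
  have "i0 \<in> S" "finite S" using i0 unfolding S_def by auto
  define L where "L = (\<Prod>i\<in>S - {i0}. [:- (\<beta> ^ i), 1:])"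
  have "degree L = card (S - {i0})"
    unfolding L_def by (subst degree_prod_eq_sum_degree) auto
  then have "degree L < D"
    using \<open>card S \<le> D\<close> \<open>i0 \<in> S\<close> \<open>finite S\<close> card_Diff1_less[of S i0] by linarith
  have "(\<Sum>i<n. u i * poly L (\<beta> ^ i)) = (\<Sum>i<n. \<Sum>k\<le>degree L. coeff L k * (u i * \<beta> ^ (i * k)))"
    by (simp add: poly_altdef sum_distrib_left mult_ac power_mult)
  also have "\<dots> = (\<Sum>k\<le>degree L. coeff L k * (\<Sum>i<n. u i * \<beta> ^ (i * k)))"
    by (subst sum.swap) (simp add: sum_distrib_left)
  also have "\<dots> = 0" using \<open>degree L < D\<close> by (simp add: vanish)
  finally have "(\<Sum>i<n. u i * poly L (\<beta> ^ i)) = 0" .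
  moreover have "(\<Sum>i<n. u i * poly L (\<beta> ^ i)) = u i0 * poly L (\<beta> ^ i0)"
  proof -
    have "u i * poly L (\<beta> ^ i) = 0" if "i \<in> {..<n} - {i0}" for i
      using that unfolding L_def S_def poly_prod by (cases "u i = 0") (auto simp: \<open>finite S\<close> prod_zero_iff S_def)
    then have "(\<Sum>i\<in>{..<n} - {i0}. u i * poly L (\<beta> ^ i)) = 0" by (intro sum.neutral) blast
    then show ?thesis using i0 by (subst sum.remove[of _ i0]) auto
  qed
  moreover have "poly L (\<beta> ^ i0) \<noteq> 0"
  proof -
    have "\<beta> ^ i0 \<noteq> \<beta> ^ i" if "i \<in> S - {i0}" for i
      using that i0 inj_onD[OF inj, of i0 i] unfolding S_def by auto
    then show ?thesis unfolding L_def poly_prod using \<open>finite S\<close> by (simp add: prod_zero_iff)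
  qed
  ultimately show False using i0 by simp
qed

lemma min_dist_ge_if_power_sums_vanish:
  fixes e :: "'a::field \<Rightarrow> 'c::field" and \<beta> :: 'c
  assumes emb: "field_emb e" and inj: "inj_on (\<lambda>i. \<beta> ^ i) {..<n}" and "C \<subseteq> vecs n"
    and vanish: "\<And>y s. y \<in> C \<Longrightarrow> s < D \<Longrightarrow> (\<Sum>i<n. e (y i) * \<beta> ^ (i * s)) = 0"
  shows "min_dist_ge n C (D + 1)"
  unfolding min_dist_ge_def
proof (intro ballI impI)
  fix x y assume "x \<in> C" "y \<in> C" "x \<noteq> y"
  define u where "u i = e (x i) - e (y i)" for i
  have support: "{i. i < n \<and> u i \<noteq> 0} = {i \<in> {0..<n}. x i \<noteq> y i}"
    using inj_field_emb[OF emb] by (auto simp: u_def inj_eq)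
  have "x \<in> vecs n" "y \<in> vecs n" using \<open>x \<in> C\<close> \<open>y \<in> C\<close> \<open>C \<subseteq> vecs n\<close> by auto
  have "\<exists>i<n. x i \<noteq> y i"
  proof (rule ccontr)
    assume "\<not> (\<exists>i<n. x i \<noteq> y i)"
    then have "x i = y i" for i
      using \<open>x \<in> vecs n\<close> \<open>y \<in> vecs n\<close> unfolding vecs_def by (cases "i < n") (blast, simp)
    then show False using \<open>x \<noteq> y\<close> by auto
  qed
  then obtain i0 where "i0 < n" "x i0 \<noteq> y i0" by blast
  have "D < card {i. i < n \<and> u i \<noteq> 0}"
  proof (rule bch_bound[OF inj])
    show "(\<Sum>i<n. u i * \<beta> ^ (i * s)) = 0" if "s < D" for s
      using vanish[OF \<open>x \<in> C\<close> that] vanish[OF \<open>y \<in> C\<close> that]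
      by (simp add: u_def left_diff_distrib sum_subtractf)
    show "u i0 \<noteq> 0" using \<open>x i0 \<noteq> y i0\<close> inj_field_emb[OF emb] by (simp add: u_def inj_eq)
  qed fact
  then show "D + 1 \<le> hamming_dist n x y" unfolding hamming_dist_def support by simp
qed

section \<open>Primitive elements and trace codewords\<close>

context
  fixes \<alpha> :: "'c::{finite,field}"
  assumes primitive: "primitive_elem \<alpha>"
begin

lemma primitive_elem_power_card_minus_1: "\<alpha> ^ (card (UNIV :: 'c set) - 1) = 1"
proof -
  have "\<alpha> ^ Suc (card (UNIV :: 'c set) - 1) = \<alpha>"
    using finite_field_power_card[of \<alpha>] card_field_ge_2[where 'c = 'c] by simp
  then show ?thesis using primitive by (simp add: primitive_elem_def)
qed

lemma primitive_elem_power_mod: "\<alpha> ^ t = \<alpha> ^ (t mod (card (UNIV :: 'c set) - 1))"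
proof -
  let ?N = "card (UNIV :: 'c set) - 1"
  have "\<alpha> ^ t = (\<alpha> ^ ?N) ^ (t div ?N) * \<alpha> ^ (t mod ?N)"
    by (simp flip: power_mult power_add)
  also have "\<dots> = \<alpha> ^ (t mod ?N)"
    by (simp only: primitive_elem_power_card_minus_1 power_one mult_1_left)
  finally show ?thesis .
qed

lemma inj_on_primitive_elem_power: "inj_on (\<lambda>i. \<alpha> ^ i) {..<card (UNIV :: 'c set) - 1}"
proof (rule eq_card_imp_inj_on)
  let ?N = "card (UNIV :: 'c set) - 1"
  have "(\<lambda>i. \<alpha> ^ i) ` {..<?N} = UNIV - {0}"
  proof
    show "(\<lambda>i. \<alpha> ^ i) ` {..<?N} \<subseteq> UNIV - {0}" using primitive by (auto simp: primitive_elem_def)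
    show "UNIV - {0} \<subseteq> (\<lambda>i. \<alpha> ^ i) ` {..<?N}"
    proof
      fix x :: 'c assume "x \<in> UNIV - {0}"
      then obtain k where "x = \<alpha> ^ (k mod ?N)"
        using primitive primitive_elem_power_mod unfolding primitive_elem_def by (metis DiffD2 insertI1)
      moreover have "0 < ?N" using card_field_ge_2[where 'c = 'c] by simp
      ultimately show "x \<in> (\<lambda>i. \<alpha> ^ i) ` {..<?N}" by auto
    qed
  qed
  then show "card ((\<lambda>i. \<alpha> ^ i) ` {..<?N}) = card {..<?N}"
    by (simp add: card_Diff_singleton)
qed simp

lemma primitive_elem_power_eq_1_iff: "\<alpha> ^ t = 1 \<longleftrightarrow> (card (UNIV :: 'c set) - 1) dvd t"
proof -
  let ?N = "card (UNIV :: 'c set) - 1"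
  have "\<alpha> ^ t = 1 \<longleftrightarrow> \<alpha> ^ (t mod ?N) = \<alpha> ^ 0" by (subst primitive_elem_power_mod) simp
  also have "\<dots> \<longleftrightarrow> t mod ?N = 0"
    using inj_onD[OF inj_on_primitive_elem_power, of "t mod ?N" 0] card_field_ge_2[where 'c = 'c]
    by auto
  finally show ?thesis by (simp add: dvd_eq_mod_eq_0)
qed

end

locale bch_setting = finite_field_extension e q m
  for e :: "'a::{finite,field} \<Rightarrow> 'b::{finite,field}" and q m +
  fixes \<alpha> :: 'b and n :: nat
  assumes primitive: "primitive_elem \<alpha>"
    and n_def: "n = q ^ m - 1"
begin

lemma n_eq: "n = card (UNIV :: 'b set) - 1"
  by (simp add: n_def card_extension)

(* The entries trace (b * alpha^(i*s)) lie in the image of e by trace_in_range. *)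
definition trace_word :: "'b \<Rightarrow> nat \<Rightarrow> nat \<Rightarrow> 'a" where
  "trace_word b s i = (if i < n then inv_into UNIV e (trace (b * \<alpha> ^ (i * s))) else 0)"

lemma emb_trace_word: "i < n \<Longrightarrow> e (trace_word b s i) = trace (b * \<alpha> ^ (i * s))"
  unfolding trace_word_def using trace_in_range by (simp add: f_inv_into_f)

lemma poly_trace_word_eq_0:
  assumes "\<And>j. \<not> n dvd s * q ^ j + z"
  shows "poly (vec_poly e n (trace_word b s)) (\<alpha> ^ z) = 0"
proof -
  have "poly (vec_poly e n (trace_word b s)) (\<alpha> ^ z) = (\<Sum>i<n. trace (b * \<alpha> ^ (i * s)) * (\<alpha> ^ z) ^ i)"
    unfolding vec_poly_def poly_Poly_map_upt by (simp add: emb_trace_word)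
  also have "\<dots> = (\<Sum>i<n. \<Sum>j<m. b ^ (q ^ j) * (\<alpha> ^ (s * q ^ j + z)) ^ i)"
  proof -
    have "(b * \<alpha> ^ (i * s)) ^ (q ^ j) * (\<alpha> ^ z) ^ i = b ^ (q ^ j) * (\<alpha> ^ (s * q ^ j + z)) ^ i" for i j
    proof -
      have "(b * \<alpha> ^ (i * s)) ^ (q ^ j) * (\<alpha> ^ z) ^ i = b ^ (q ^ j) * \<alpha> ^ (i * s * q ^ j + z * i)"
        by (simp add: power_mult_distrib power_add flip: power_mult)
      also have "i * s * q ^ j + z * i = (s * q ^ j + z) * i" by (simp add: algebra_simps)
      finally show ?thesis by (simp only: power_mult)
    qed
    then show ?thesis unfolding trace_def sum_distrib_right by simp
  qed
  also have "\<dots> = (\<Sum>j<m. b ^ (q ^ j) * (\<Sum>i<n. (\<alpha> ^ (s * q ^ j + z)) ^ i))"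
    by (subst sum.swap) (simp add: sum_distrib_left)
  also have "\<dots> = 0"
  proof (intro sum.neutral ballI)
    fix j
    have "(\<alpha> ^ (s * q ^ j + z)) ^ n = 1"
      using primitive_elem_power_eq_1_iff[OF primitive] by (simp add: n_eq flip: power_mult)
    moreover have "\<alpha> ^ (s * q ^ j + z) \<noteq> 1"
      using assms primitive_elem_power_eq_1_iff[OF primitive] by (simp add: n_eq)
    ultimately show "b ^ (q ^ j) * (\<Sum>i<n. (\<alpha> ^ (s * q ^ j + z)) ^ i) = 0"
      by (simp add: geometric_sum)
  qed
  finally show ?thesis .
qed

lemma trace_word_in_bch_code:
  assumes "\<delta> \<le> delta_max q m" and s: "s < delta_max q m"
  shows "trace_word b s \<in> bch_code e q \<alpha> n \<delta>"
proof -
  define Z where "Z = (\<Union>i\<in>{1..\<delta>-1}. cyc_coset q n i)"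
  have "Z \<subseteq> {..<n}" unfolding Z_def cyc_coset_def using n_eq card_field_ge_2[where 'c = 'b] by auto
  have "bch_gen q \<alpha> n \<delta> dvd vec_poly e n (trace_word b s)"
    unfolding bch_gen_def Z_def[symmetric]
  proof (rule prod_linear_factors_dvd)
    show "finite Z" using \<open>Z \<subseteq> {..<n}\<close> finite_subset by blast
    show "inj_on (\<lambda>z. \<alpha> ^ z) Z"
      using inj_on_primitive_elem_power[OF primitive] \<open>Z \<subseteq> {..<n}\<close> unfolding n_eq by (rule inj_on_subset)
    fix z assume "z \<in> Z"
    then obtain i where i_range: "i \<in> {1..\<delta>-1}" and "z \<in> cyc_coset q n i"
      unfolding Z_def by blast
    then obtain l where z: "z = i * q ^ l mod n" unfolding cyc_coset_def by blast
    have i: "0 < i" "i < delta_max q m" using i_range assms(1) by auto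
    have "\<not> n dvd s * q ^ j + z" for j
    proof -
      have "n dvd s * q ^ j + z \<longleftrightarrow> n dvd s * q ^ j + i * q ^ l"
        unfolding z by (simp add: dvd_eq_mod_eq_0 mod_add_right_eq)
      then show ?thesis using not_dvd_mult_power_add_mult_power[OF q_ge_2 s i, of j l] n_def by simp
    qed
    then show "poly (vec_poly e n (trace_word b s)) (\<alpha> ^ z) = 0"
      by (rule poly_trace_word_eq_0)
  qed
  moreover have "trace_word b s \<in> vecs n" unfolding vecs_def trace_word_def by simp
  ultimately show ?thesis unfolding bch_code_def by simp
qed

lemma dual_bch_code_power_sum_eq_0:
  assumes y: "y \<in> dual_code n (bch_code e q \<alpha> n \<delta>)"
    and "\<delta> \<le> delta_max q m" and "s < delta_max q m"
  shows "(\<Sum>i<n. e (y i) * \<alpha> ^ (i * s)) = 0"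
proof (rule ccontr)
  define W where "W = (\<Sum>i<n. e (y i) * \<alpha> ^ (i * s))"
  assume "W \<noteq> 0"
  obtain b0 where "trace b0 \<noteq> 0" using trace_nonzero by blast
  define b where "b = b0 / W"
  have "trace_word b s \<in> bch_code e q \<alpha> n \<delta>" using assms by (intro trace_word_in_bch_code)
  then have "e (\<Sum>i<n. trace_word b s i * y i) = 0"
    using y field_emb_zero[OF emb] unfolding dual_code_def by auto
  also have "e (\<Sum>i<n. trace_word b s i * y i) = (\<Sum>i<n. trace (e (y i) * (b * \<alpha> ^ (i * s))))"
    by (simp add: field_emb_sum[OF emb] field_emb_mult[OF emb] emb_trace_word trace_emb_mult mult.commute)
  also have "\<dots> = trace (b * W)"
    unfolding W_def trace_sum[symmetric] by (simp add: sum_distrib_left mult_ac)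
  also have "b * W = b0" unfolding b_def using \<open>W \<noteq> 0\<close> by simp
  finally show False using \<open>trace b0 \<noteq> 0\<close> by simp
qed

end

theorem mainTheorem8:
  fixes e :: "'a::{finite,field} \<Rightarrow> 'b::{finite,field}"
    and \<alpha> :: 'b and q m n \<delta> :: nat
  assumes "q = card (UNIV :: 'a set)"
    and "m \<ge> 2"
    and "card (UNIV :: 'b set) = q ^ m"
    and "field_emb e"
    and "primitive_elem \<alpha>"
    and "n = q ^ m - 1"
    and "2 \<le> \<delta>" and "\<delta> \<le> delta_max q m"
  shows "min_dist_ge n (dual_code n (bch_code e q \<alpha> n \<delta>)) (delta_max q m + 1)"
proof -
  interpret bch_setting e q m \<alpha> n
    using assms(1,3-6) by unfold_locales simp_all
  show ?thesis
  proof (rule min_dist_ge_if_power_sums_vanish[OF emb])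
    show "inj_on (\<lambda>i. \<alpha> ^ i) {..<n}"
      using inj_on_primitive_elem_power[OF primitive] by (simp add: n_eq)
    show "dual_code n (bch_code e q \<alpha> n \<delta>) \<subseteq> vecs n" by (auto simp: dual_code_def)
  qed (rule dual_bch_code_power_sum_eq_0[OF _ assms(8)])
qed

end
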